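(* Let $(A\mid R)$ be a finite presentation. Then either $(A\mid R)$ is firstly irreducible, or there is a finite sequence of presentations $(A\mid R)\leadsto_1(A_1\mid R_1)\leadsto_1\cdots\leadsto_1(A_n\mid R_n)$ in which each step is one of the transformations (I)–(III) and $(A_n\mid R_n)$ is firstly irreducible.
   Context: $\mathbb{M}_A$ is the free magma on a non-empty set $A$ (non-associative words with $x+y=(x,y)$); $\mathbb{M}_A^2$ has componentwise operation. A finite presentation is $(A\mid R)$ with $A$ finite non-empty and $R\subseteq\mathbb{M}_A^2$ finite. $\mathcal{G}(\mathbb{M}_A^2)=(A\times\mathbb{M}_A)\cup(\mathbb{M}_A\times A)$. For $p\in\mathbb{M}_A^2$, $\mathbf{g}(p)=\mathbf{g}(p_1)\cup\mathbf{g}(p_2)$ if $p=p_1+p_2$ with $p_1,p_2\in\mathbb{M}_A^2$, and $\mathbf{g}(p)=\{p\}$ otherwise; $\mathbf{g}(S)=\bigcup_{p\in S}\mathbf{g}(p)$. The transformations are: (I) if some $(x,y)\in R$ is not in $\mathcal{G}(\mathbb{M}_A^2)$, replace $(A\mid R)$ by $(A\mid\mathbf{g}(R))$. (II) if $(a,y),(a,y')\in R\cap(A\times(\mathbb{M}_A\setminus A))$ with $y\neq y'$, replace by $(A\mid (R\setminus\{(a,y')\})\cup\mathbf{g}((y,y')))$. (III) if $(x,b),(x',b)\in R\cap((\mathbb{M}_A\setminus A)\times A)$ with $x\neq x'$, replace by $(A\mid (R\setminus\{(x',b)\})\cup\mathbf{g}((x,x')))$. A presentation is firstly irreducible if none of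 (I)–(III) is applicable; $\leadsto_1$ denotes application of one of (I)–(III). *)

theory Defs
  imports Main
begin

text \<open>The free magma: a non-associative word over generators of type 'a.
  The free magma M_A on a set A is the set of words all of whose generators lie in A.\<close>
datatype 'a magma = Gen 'a | Op "'a magma" "'a magma"

fun gens :: "'a magma \<Rightarrow> 'a set" where
  "gens (Gen a) = {a}"
| "gens (Op x y) = gens x \<union> gens y"

definition magma_on :: "'a set \<Rightarrow> 'a magma set" where
  "magma_on A = {t. gens t \<subseteq> A}"

type_synonym 'a presentation = "'a set \<times> ('a magma \<times> 'a magma) set"

definition finite_presentation :: "'a presentation \<Rightarrow> bool" where
  "finite_presentation P \<longleftrightarrow> finite (fst P) \<and> fst P \<noteq> {} \<and> finite (snd P)
      \<and> snd P \<subseteq> magma_on (fst P) \<times> magma_on (fst P)"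

definition Gpairs :: "'a set \<Rightarrow> ('a magma \<times> 'a magma) set" where
  "Gpairs A = (Gen ` A \<times> magma_on A) \<union> (magma_on A \<times> Gen ` A)"

fun gdec :: "('a magma \<times> 'a magma) \<Rightarrow> ('a magma \<times> 'a magma) set" where
  "gdec (Op x1 x2, Op y1 y2) = gdec (x1, y1) \<union> gdec (x2, y2)"
| "gdec p = {p}"

definition gset :: "('a magma \<times> 'a magma) set \<Rightarrow> ('a magma \<times> 'a magma) set" where
  "gset S = (\<Union>p\<in>S. gdec p)"

inductive step1 :: "'a presentation \<Rightarrow> 'a presentation \<Rightarrow> bool" where
  tI: "p \<in> R \<Longrightarrow> p \<notin> Gpairs A \<Longrightarrow> step1 (A, R) (A, gset R)"
| tII: "(Gen a, y) \<in> R \<Longrightarrow> (Gen a, y') \<in> R \<Longrightarrow> a \<in> A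
        \<Longrightarrow> y \<in> magma_on A - Gen ` A \<Longrightarrow> y' \<in> magma_on A - Gen ` A \<Longrightarrow> y \<noteq> y'
        \<Longrightarrow> step1 (A, R) (A, (R - {(Gen a, y')}) \<union> gdec (y, y'))"
| tIII: "(x, Gen b) \<in> R \<Longrightarrow> (x', Gen b) \<in> R \<Longrightarrow> b \<in> A
        \<Longrightarrow> x \<in> magma_on A - Gen ` A \<Longrightarrow> x' \<in> magma_on A - Gen ` A \<Longrightarrow> x \<noteq> x'
        \<Longrightarrow> step1 (A, R) (A, (R - {(x', Gen b)}) \<union> gdec (x, x'))"

definition firstly_irreducible :: "'a presentation \<Rightarrow> bool" where
  "firstly_irreducible P \<longleftrightarrow> \<not> (\<exists>Q. step1 P Q)"

end

theory Submission
  imports Defs "HOL-Library.Multiset"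
begin

text \<open>Measure a relation (x, y) by max |x| |y| and a presentation by the multiset of the
  measures of its relations. Transformation (I) replaces each relation outside G(M_A^2),
  whose two sides are then both products, by the pieces of its decomposition, which are
  strictly smaller. Transformations (II) and (III) may always be applied so that the longer
  of the two words y, y' is the one removed; the pieces of g((y, y')) are then smaller than
  the removed relation. Hence every reducible finite presentation admits a step that
  decreases the measure in the well-founded multiset order, and iterating such steps must
  end in a firstly irreducible presentation.\<close>

lemma reaches_normal_form_by_decreasing_steps:
  assumes "wf r" and "I x"
    and decreasing_step: "\<And>x. I x \<Longrightarrow> \<exists>y. step x y \<Longrightarrow> \<exists>y. step x y \<and> I y \<and> (f y, f x) \<in> r"
  shows "\<exists>y. step\<^sup>*\<^sup>* x y \<and> \<not> (\<exists>z. step y z)"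
  using wf_inv_image[OF \<open>wf r\<close>, of f] \<open>I x\<close>
proof (induction x rule: wf_induct_rule)
  case (less x)
  show ?case
  proof (cases "\<exists>y. step x y")
    case True
    then obtain y where "step x y" "I y" "(f y, f x) \<in> r"
      using decreasing_step \<open>I x\<close> by blast
    with less.IH obtain z where "step\<^sup>*\<^sup>* y z" "\<not> (\<exists>w. step z w)"
      by auto
    with \<open>step x y\<close> show ?thesis
      by (meson converse_rtranclp_into_rtranclp)
  qed auto
qed

lemma tranclp_imp_chain:
  assumes "r\<^sup>+\<^sup>+ x y"
  shows "\<exists>(n::nat) f. n \<ge> 1 \<and> f 0 = x \<and> (\<forall>i<n. r (f i) (f (Suc i))) \<and> f n = y"
  using assms unfolding tranclp_power relpowp_fun_conv by (auto simp: Suc_le_eq)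

lemma mult_image_mset_set_replace:
  assumes "finite R" "X \<subseteq> R" "X \<noteq> {}" "finite S"
    and smaller: "\<And>s. s \<in> S \<Longrightarrow> \<exists>x\<in>X. (f s, f x) \<in> r"
  shows "(image_mset f (mset_set (R - X \<union> S)), image_mset f (mset_set R)) \<in> mult r"
proof -
  have finite_X: "finite X"
    using assms(1,2) finite_subset by blast
  have "mset_set (R - X \<union> S) = mset_set (R - X) + mset_set (S - (R - X))"
    using assms by (subst mset_set_Union[symmetric]) (auto intro: arg_cong[where f = mset_set])
  moreover have "mset_set R = mset_set (R - X) + mset_set X"
    using assms finite_X by (subst mset_set_Union[symmetric]) (auto intro: arg_cong[where f = mset_set])
  moreover have "(image_mset f (mset_set (R - X)) + image_mset f (mset_set (S - (R - X))),
                  image_mset f (mset_set (R - X)) + image_mset f (mset_set X)) \<in> mult r"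
    using assms finite_X by (intro one_step_implies_mult) (auto simp: mset_set_empty_iff)
  ultimately show ?thesis
    by simp
qed

definition relation_size :: "'a magma \<times> 'a magma \<Rightarrow> nat" where
  "relation_size p = max (size (fst p)) (size (snd p))"

definition relation_sizes :: "('a magma \<times> 'a magma) set \<Rightarrow> nat multiset" where
  "relation_sizes R = image_mset relation_size (mset_set R)"

lemma finite_gdec: "finite (gdec p)"
  by (induction p rule: gdec.induct) auto

lemma size_gdec_le: "s \<in> gdec p \<Longrightarrow> size (fst s) \<le> size (fst p) \<and> size (snd s) \<le> size (snd p)"
  by (induction p rule: gdec.induct) fastforce+

lemma relation_size_gdec_less:
  assumes "x \<notin> range Gen" "y \<notin> range Gen" "s \<in> gdec (x, y)"
  shows "relation_size s < relation_size (x, y)"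
proof -
  obtain x1 x2 y1 y2 where "x = Op x1 x2" "y = Op y1 y2"
    using assms(1,2) by (cases x; cases y) auto
  then show ?thesis
    using assms(3) size_gdec_le[of s "(x1, y1)"] size_gdec_le[of s "(x2, y2)"]
    by (auto simp: relation_size_def)
qed

lemma gdec_subset_Gpairs: "x \<in> magma_on A \<Longrightarrow> y \<in> magma_on A \<Longrightarrow> gdec (x, y) \<subseteq> Gpairs A"
  by (induction "(x, y)" arbitrary: x y rule: gdec.induct)
    (auto simp: Gpairs_def magma_on_def)

lemma Gpairs_subset_magma_on: "Gpairs A \<subseteq> magma_on A \<times> magma_on A"
  by (auto simp: Gpairs_def magma_on_def)

lemma gdec_Gpairs: "p \<in> Gpairs A \<Longrightarrow> gdec p = {p}"
proof -
  have "gdec (Gen a, y) = {(Gen a, y)}" "gdec (x, Gen a) = {(x, Gen a)}" for a x y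
    by (cases x; simp)+
  then show "p \<in> Gpairs A \<Longrightarrow> gdec p = {p}"
    by (auto simp: Gpairs_def)
qed

lemma not_Gpairs_sides_not_Gen:
  assumes "p \<in> magma_on A \<times> magma_on A" "p \<notin> Gpairs A"
  shows "fst p \<notin> range Gen" "snd p \<notin> range Gen"
  using assms by (auto simp: Gpairs_def magma_on_def)

lemma magma_on_not_Gen: "x \<in> magma_on A - Gen ` A \<Longrightarrow> x \<notin> range Gen"
  by (auto simp: magma_on_def)

lemma finite_presentation_gset:
  assumes "finite_presentation (A, R)"
  shows "finite_presentation (A, gset R)"
proof -
  have "gset R \<subseteq> Gpairs A"
    using assms gdec_subset_Gpairs by (fastforce simp: finite_presentation_def gset_def)
  then have "gset R \<subseteq> magma_on A \<times> magma_on A"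
    using Gpairs_subset_magma_on by blast
  then show ?thesis
    using assms finite_gdec by (auto simp: finite_presentation_def gset_def)
qed

lemma relation_sizes_gset_less:
  assumes "finite_presentation (A, R)" "p \<in> R" "p \<notin> Gpairs A"
  shows "(relation_sizes (gset R), relation_sizes R) \<in> mult less_than"
proof -
  define X where "X = R - Gpairs A"
  have R_sub: "R \<subseteq> magma_on A \<times> magma_on A" and "finite R"
    using assms(1) by (auto simp: finite_presentation_def)
  have "gset (R - X) = (\<Union>p\<in>R - X. {p})"
    unfolding gset_def X_def by (rule SUP_cong) (auto intro!: gdec_Gpairs)
  then have "gset (R - X) = R - X"
    by blast
  then have gset_R: "gset R = R - X \<union> gset X"
    by (auto simp: gset_def X_def)
  have smaller: "\<exists>x\<in>X. (relation_size s, relation_size x) \<in> less_than" if "s \<in> gset X" for s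
  proof -
    obtain x where "x \<in> X" "s \<in> gdec x"
      using \<open>s \<in> gset X\<close> by (auto simp: gset_def)
    moreover from \<open>x \<in> X\<close> have "x \<in> magma_on A \<times> magma_on A" "x \<notin> Gpairs A"
      using R_sub by (auto simp: X_def)
    ultimately show ?thesis
      using relation_size_gdec_less[of "fst x" "snd x" s] not_Gpairs_sides_not_Gen by fastforce
  qed
  have "finite (gset X)"
    using \<open>finite R\<close> by (simp add: gset_def X_def finite_gdec)
  then show ?thesis
    unfolding relation_sizes_def gset_R using \<open>finite R\<close> assms(2,3)
    by (intro mult_image_mset_set_replace[OF _ _ _ _ smaller]) (auto simp: X_def)
qed

lemma replace_by_gdec_decreasing:
  assumes "finite_presentation (A, R)" "q \<in> R"
    and "u \<in> magma_on A - Gen ` A" "v \<in> magma_on A - Gen ` A"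
    and "size u \<le> size v" "size v \<le> relation_size q"
  shows "finite_presentation (A, R - {q} \<union> gdec (u, v))"
    and "(relation_sizes (R - {q} \<union> gdec (u, v)), relation_sizes R) \<in> mult less_than"
proof -
  show "finite_presentation (A, R - {q} \<union> gdec (u, v))"
    using assms(1,3,4) gdec_subset_Gpairs[of u A v] Gpairs_subset_magma_on finite_gdec
    by (auto simp: finite_presentation_def)
  have "relation_size s < relation_size q" if "s \<in> gdec (u, v)" for s
    using relation_size_gdec_less[OF magma_on_not_Gen[OF assms(3)] magma_on_not_Gen[OF assms(4)] that]
      assms(5,6) by (simp add: relation_size_def)
  then show "(relation_sizes (R - {q} \<union> gdec (u, v)), relation_sizes R) \<in> mult less_than"
    unfolding relation_sizes_def using assms(1,2)
    by (intro mult_image_mset_set_replace) (auto simp: finite_gdec finite_presentation_def)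
qed

lemma exists_decreasing_step1:
  assumes "finite_presentation P" "\<exists>Q. step1 P Q"
  shows "\<exists>Q. step1 P Q \<and> finite_presentation Q
    \<and> (relation_sizes (snd Q), relation_sizes (snd P)) \<in> mult less_than"
proof -
  obtain Q where "step1 P Q"
    using assms(2) by blast
  then show ?thesis
  proof cases
    case (tI p R A)
    then have "step1 (A, R) (A, gset R)"
      by (intro step1.tI)
    then show ?thesis
      using tI assms(1) finite_presentation_gset[of A R] relation_sizes_gset_less[of A R p] by auto
  next
    case (tII a y R y' A)
    obtain u v where uv: "(Gen a, u) \<in> R" "(Gen a, v) \<in> R" "u \<in> magma_on A - Gen ` A"
      "v \<in> magma_on A - Gen ` A" "u \<noteq> v" "size u \<le> size v"
      using tII by (cases "size y \<le> size y'") auto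
    define R' where "R' = R - {(Gen a, v)} \<union> gdec (u, v)"
    have "step1 (A, R) (A, R')"
      unfolding R'_def using uv tII by (intro step1.tII) auto
    moreover have "finite_presentation (A, R')" "(relation_sizes R', relation_sizes R) \<in> mult less_than"
      unfolding R'_def using replace_by_gdec_decreasing[of A R "(Gen a, v)" u v] assms(1) tII uv
      by (simp_all add: relation_size_def)
    ultimately show ?thesis
      using tII by auto
  next
    case (tIII x b R x' A)
    obtain u v where uv: "(u, Gen b) \<in> R" "(v, Gen b) \<in> R" "u \<in> magma_on A - Gen ` A"
      "v \<in> magma_on A - Gen ` A" "u \<noteq> v" "size u \<le> size v"
      using tIII by (cases "size x \<le> size x'") auto
    define R' where "R' = R - {(v, Gen b)} \<union> gdec (u, v)"
    have "step1 (A, R) (A, R')"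
      unfolding R'_def using uv tIII by (intro step1.tIII) auto
    moreover have "finite_presentation (A, R')" "(relation_sizes R', relation_sizes R) \<in> mult less_than"
      unfolding R'_def using replace_by_gdec_decreasing[of A R "(v, Gen b)" u v] assms(1) tIII uv
      by (simp_all add: relation_size_def)
    ultimately show ?thesis
      using tIII by auto
  qed
qed

theorem lemma7p9:
  fixes P :: "'a presentation"
  assumes "finite_presentation P"
  shows "firstly_irreducible P \<or>
         (\<exists>(n::nat) (Ps :: nat \<Rightarrow> 'a presentation). n \<ge> 1 \<and> Ps 0 = P
            \<and> (\<forall>i<n. step1 (Ps i) (Ps (Suc i))) \<and> firstly_irreducible (Ps n))"
proof -
  have "\<exists>Q. step1\<^sup>*\<^sup>* P Q \<and> \<not> (\<exists>Q'. step1 Q Q')"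
    using wf_mult[OF wf_less_than] assms exists_decreasing_step1
    by (rule reaches_normal_form_by_decreasing_steps[where I = finite_presentation
          and step = step1 and f = "\<lambda>P. relation_sizes (snd P)"])
  then obtain Q where "step1\<^sup>*\<^sup>* P Q" and Q_irreducible: "firstly_irreducible Q"
    unfolding firstly_irreducible_def by blast
  from rtranclpD[OF this(1)] show ?thesis
  proof
    assume "P = Q"
    then show ?thesis
      using Q_irreducible by simp
  next
    assume "P \<noteq> Q \<and> step1\<^sup>+\<^sup>+ P Q"
    then obtain n Ps where "n \<ge> 1" "Ps 0 = P" "\<forall>i<n. step1 (Ps i) (Ps (Suc i))" "Ps n = Q"
      using tranclp_imp_chain[of step1 P Q] by blast
    then show ?thesis
      using Q_irreducible by (intro disjI2 exI[of _ n] exI[of _ Ps]) simp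
  qed
qed

end
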